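(* Let $G$ be a locally compact abelian group, $\gamma\in\Gamma$ and $c>0$. For each $g\in L^2_{\mu_G}(G)$ there exists a unique $u_g\in\mathcal H^{c,\infty}(G)$ with $L_cu_g=g$, and moreover \[ \|u_g\|_{\mathcal H^{c,\infty}(G)}=\|g\|_{L^2_{\mu_G}(G)}. \]
   Context: $G$ is a locally compact abelian group with Haar measure $\mu_G$; $G^\wedge$ is its dual group (continuous homomorphisms $G\to\{z\in\mathbb C:|z|=1\}$, a locally compact abelian group under pointwise multiplication) with Haar measure $\mu_{G^\wedge}$ normalized so that the Plancherel theorem and Fourier inversion hold. $\mathcal F$ denotes the Fourier transform $L^2_{\mu_G}(G)\to L^2(G^\wedge)$ (given for $f\in L^1\cap L^2$ by $\mathcal F f(\xi)=\int_G\overline{\xi(x)}f(x)\,d\mu_G(x)$) and $\mathcal F^{-1}$ its inverse. $\Gamma$ is the set of functions $\gamma:G^\wedge\to[0,\infty)$ for which there is a constant $c_\gamma$ with $\gamma(\alpha\beta)\le c_\gamma[\gamma(\alpha)+\gamma(\beta)]$ for all $\alpha,\beta\in G^\wedge$. For $c>0$, $\mathcal H^{c,\infty}(G)$ is the set of $f\in L^2_{\mu_G}(G)$ with $\|f\|_{\mathcal H^{c,\infty}(G)}=\left(\int_{G^\wedge}\left(1+\gamma(\xi)^2e^{c\gamma(\xi)^2}\right)^2|\mathcal F f(\xi)|^2\,d\mu_{G^\wedge}(\xi)\right)^{1/2}<\infty$. The operator $L_c$ (formally $\Delta e^{-c\Delta}-\mathrm{Id}$) is defined on $\mathcal H^{c,\infty}(G)$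 by $L_cu=-\mathcal F^{-1}\big((1+\gamma(\xi)^2e^{c\gamma(\xi)^2})\,\mathcal F u(\xi)\big)$. *)

theory Defs
  imports "HOL-Analysis.Analysis"
begin

definition borel_of :: "'a topology \<Rightarrow> 'a measure" where
  "borel_of X = sigma (topspace X) {U. openin X U}"

definition radon_measure_on :: "'a topology \<Rightarrow> 'a measure \<Rightarrow> bool" where
  "radon_measure_on X M \<longleftrightarrow>
     space M = topspace X \<and> sets M = sets (borel_of X) \<and>
     (\<forall>K. compactin X K \<longrightarrow> emeasure M K < \<infinity>) \<and>
     (\<forall>A\<in>sets M. emeasure M A = (INF U\<in>{U. openin X U \<and> A \<subseteq> U}. emeasure M U)) \<and>
     (\<forall>U. openin X U \<longrightarrow> emeasure M U = (SUP K\<in>{K. compactin X K \<and> K \<subseteq> U}. emeasure M K))"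

definition haar_measure_on :: "'a topology \<Rightarrow> ('a \<Rightarrow> 'a \<Rightarrow> 'a) \<Rightarrow> 'a measure \<Rightarrow> bool" where
  "haar_measure_on X gmult M \<longleftrightarrow>
     radon_measure_on X M \<and>
     (\<forall>a\<in>topspace X. \<forall>A\<in>sets M. emeasure M (gmult a ` A) = emeasure M A) \<and>
     emeasure M (topspace X) \<noteq> 0"

text \<open>A locally compact (Hausdorff) abelian topological group, realised as a type
  with its type-class topology.\<close>
definition LCA_group :: "'g::{ab_group_add, t2_space} itself \<Rightarrow> bool" where
  "LCA_group _ \<longleftrightarrow>
     continuous_on UNIV (\<lambda>p::'g \<times> 'g. fst p - snd p) \<and>
     locally_compact_space (euclidean :: 'g topology)"

definition dual_group :: "('g::{ab_group_add, topological_space} \<Rightarrow> complex) set" where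
  "dual_group = {\<xi>. continuous_on UNIV \<xi> \<and> (\<forall>x. cmod (\<xi> x) = 1) \<and>
                     (\<forall>x y. \<xi> (x + y) = \<xi> x * \<xi> y)}"

definition dual_mult :: "('g \<Rightarrow> complex) \<Rightarrow> ('g \<Rightarrow> complex) \<Rightarrow> ('g \<Rightarrow> complex)" where
  "dual_mult \<alpha> \<beta> = (\<lambda>x. \<alpha> x * \<beta> x)"

text \<open>Compact-open topology on the dual (= topology of uniform convergence on
  compact sets), generated by the sets of characters uniformly eps-close to eta on K.\<close>
definition dual_topology :: "('g::{ab_group_add, topological_space} \<Rightarrow> complex) topology" where
  "dual_topology = topology_generated_by
     {{\<xi>\<in>dual_group. \<forall>x\<in>K. cmod (\<xi> x - \<eta> x) < e} | \<eta> K e.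
        \<eta> \<in> dual_group \<and> compact K \<and> e > 0}"

definition L2 :: "'a measure \<Rightarrow> ('a \<Rightarrow> complex) set" where
  "L2 M = {f. f \<in> borel_measurable M \<and> integrable M (\<lambda>x. (cmod (f x))\<^sup>2)}"

definition L2_norm :: "'a measure \<Rightarrow> ('a \<Rightarrow> complex) \<Rightarrow> real" where
  "L2_norm M f = sqrt (\<integral>x. (cmod (f x))\<^sup>2 \<partial>M)"

definition fourier :: "'g measure \<Rightarrow> ('g \<Rightarrow> complex) \<Rightarrow> ('g \<Rightarrow> complex) \<Rightarrow> complex" where
  "fourier \<mu> f = (\<lambda>\<xi>. \<integral>x. cnj (\<xi> x) * f x \<partial>\<mu>)"

definition L1_L2 :: "'a measure \<Rightarrow> ('a \<Rightarrow> complex) set" where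
  "L1_L2 M = {f \<in> L2 M. integrable M f}"

text \<open>fourier_L2 mu nu f h: h is (a representative of) the L2 Fourier transform of f,
  i.e. the L2-limit of the Fourier transforms of any L1 \<inter> L2 approximants of f.\<close>
definition fourier_L2 ::
  "'g measure \<Rightarrow> ('g \<Rightarrow> complex) measure \<Rightarrow> ('g \<Rightarrow> complex) \<Rightarrow> (('g \<Rightarrow> complex) \<Rightarrow> complex) \<Rightarrow> bool" where
  "fourier_L2 \<mu> \<nu> f h \<longleftrightarrow> f \<in> L2 \<mu> \<and> h \<in> L2 \<nu> \<and>
     (\<forall>\<phi>::nat \<Rightarrow> 'g \<Rightarrow> complex. (\<forall>n. \<phi> n \<in> L1_L2 \<mu>) \<longrightarrow>
        (\<lambda>n. L2_norm \<mu> (\<lambda>x. \<phi> n x - f x)) \<longlonglongrightarrow> 0 \<longrightarrow>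
        (\<lambda>n. L2_norm \<nu> (\<lambda>\<xi>. fourier \<mu> (\<phi> n) \<xi> - h \<xi>)) \<longlonglongrightarrow> 0)"

text \<open>Standing assumptions: G locally compact abelian with Haar measure mu, nu a Haar
  measure on the dual group normalised so that Plancherel holds (F is an isometry on
  L1 \<inter> L2 whose L2-extension is onto L2 of the dual) and Fourier inversion holds.\<close>
definition plancherel_setting ::
  "'g::{ab_group_add, t2_space} measure \<Rightarrow> ('g \<Rightarrow> complex) measure \<Rightarrow> bool" where
  "plancherel_setting \<mu> \<nu> \<longleftrightarrow>
     LCA_group TYPE('g) \<and>
     haar_measure_on euclidean (+) \<mu> \<and>
     haar_measure_on dual_topology dual_mult \<nu> \<and>
     (\<forall>f\<in>L1_L2 \<mu>. fourier \<mu> f \<in> L2 \<nu> \<and> L2_norm \<nu> (fourier \<mu> f) = L2_norm \<mu> f) \<and>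
     (\<forall>h\<in>L2 \<nu>. \<exists>f. fourier_L2 \<mu> \<nu> f h) \<and>
     (\<forall>f\<in>L1_L2 \<mu>. integrable \<nu> (fourier \<mu> f) \<longrightarrow>
        (AE x in \<mu>. f x = (\<integral>\<xi>. \<xi> x * fourier \<mu> f \<xi> \<partial>\<nu>)))"

definition Gamma_class :: "(('g::{ab_group_add, topological_space} \<Rightarrow> complex) \<Rightarrow> real) set" where
  "Gamma_class = {\<gamma>. (\<forall>\<alpha>\<in>dual_group. \<gamma> \<alpha> \<ge> 0) \<and>
      (\<exists>C. \<forall>\<alpha>\<in>dual_group. \<forall>\<beta>\<in>dual_group. \<gamma> (dual_mult \<alpha> \<beta>) \<le> C * (\<gamma> \<alpha> + \<gamma> \<beta>))}"

definition weight :: "(('g \<Rightarrow> complex) \<Rightarrow> real) \<Rightarrow> real \<Rightarrow> ('g \<Rightarrow> complex) \<Rightarrow> real" where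
  "weight \<gamma> c \<xi> = 1 + (\<gamma> \<xi>)\<^sup>2 * exp (c * (\<gamma> \<xi>)\<^sup>2)"

definition H_space ::
  "'g measure \<Rightarrow> ('g \<Rightarrow> complex) measure \<Rightarrow> (('g \<Rightarrow> complex) \<Rightarrow> real) \<Rightarrow> real \<Rightarrow> ('g \<Rightarrow> complex) set" where
  "H_space \<mu> \<nu> \<gamma> c = {u \<in> L2 \<mu>. \<exists>h. fourier_L2 \<mu> \<nu> u h \<and>
       integrable \<nu> (\<lambda>\<xi>. (weight \<gamma> c \<xi>)\<^sup>2 * (cmod (h \<xi>))\<^sup>2)}"

definition H_norm ::
  "'g measure \<Rightarrow> ('g \<Rightarrow> complex) measure \<Rightarrow> (('g \<Rightarrow> complex) \<Rightarrow> real) \<Rightarrow> real \<Rightarrow> ('g \<Rightarrow> complex) \<Rightarrow> real" where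
  "H_norm \<mu> \<nu> \<gamma> c u =
     sqrt (\<integral>\<xi>. (weight \<gamma> c \<xi>)\<^sup>2 * (cmod ((SOME h. fourier_L2 \<mu> \<nu> u h) \<xi>))\<^sup>2 \<partial>\<nu>)"

text \<open>Lc_solves mu nu gamma c u g: L_c u = g, i.e.
  g = - F^{-1}(weight * F u), equivalently F g = - weight * F u.\<close>
definition Lc_solves ::
  "'g measure \<Rightarrow> ('g \<Rightarrow> complex) measure \<Rightarrow> (('g \<Rightarrow> complex) \<Rightarrow> real) \<Rightarrow> real \<Rightarrow>
   ('g \<Rightarrow> complex) \<Rightarrow> ('g \<Rightarrow> complex) \<Rightarrow> bool" where
  "Lc_solves \<mu> \<nu> \<gamma> c u g \<longleftrightarrow> u \<in> H_space \<mu> \<nu> \<gamma> c \<and>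
     (\<exists>h. fourier_L2 \<mu> \<nu> u h \<and>
          fourier_L2 \<mu> \<nu> g (\<lambda>\<xi>. - complex_of_real (weight \<gamma> c \<xi>) * h \<xi>))"

end

theory Submission
  imports Defs
begin

text \<open>The \<open>L\<^sup>2\<close> Fourier transform is obtained from the Plancherel identity on
  \<open>L\<^sup>1 \<inter> L\<^sup>2\<close> by density and completeness of \<open>L\<^sup>2\<close>; it is an isometry, hence
  determined and injective up to null sets, and by assumption it is onto.  Since the
  multiplier \<open>w = 1 + \<gamma>\<^sup>2 exp (c \<gamma>\<^sup>2)\<close> is at least \<open>1\<close>, the equation \<open>L\<^sub>c u = g\<close>, i.e.
  \<open>\<F>g = -w \<F>u\<close>, is solved by the inverse transform of \<open>-\<F>g / w \<in> L\<^sup>2\<close>; the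
  solution is unique a.e. by injectivity, and \<open>\<parallel>u\<parallel>\<^sub>H = \<parallel>w \<F>u\<parallel> = \<parallel>\<F>g\<parallel> = \<parallel>g\<parallel>\<close>.\<close>

section \<open>\<open>L\<^sup>2\<close> as a pseudometric space\<close>

lemma norm_add_squared_le:
  fixes a b :: "'a::real_normed_vector"
  assumes "t > 0"
  shows "(norm (a + b))\<^sup>2 \<le> (1 + t) * (norm a)\<^sup>2 + (1 + 1/t) * (norm b)\<^sup>2"
proof -
  have "0 \<le> (t * norm a - norm b)\<^sup>2 / t" using assms by simp
  also have "\<dots> = t * (norm a)\<^sup>2 - 2 * norm a * norm b + (norm b)\<^sup>2 / t"
    using assms by (simp add: field_simps power2_eq_square)
  finally have "2 * norm a * norm b \<le> t * (norm a)\<^sup>2 + (norm b)\<^sup>2 / t" by simp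
  moreover have "(norm (a + b))\<^sup>2 \<le> (norm a + norm b)\<^sup>2"
    by (simp add: norm_triangle_ineq power_mono)
  ultimately show ?thesis by (simp add: power2_sum algebra_simps add_divide_distrib)
qed

text \<open>Minimising the right-hand side over \<open>t\<close>, attained at \<open>t = B/A\<close> when \<open>A, B > 0\<close>;
  the substitute \<open>t = (B + d)/(A + d)\<close> also covers the degenerate cases.\<close>
lemma le_sum_squared_if_weighted_bounds:
  fixes X A B :: real
  assumes "A \<ge> 0" "B \<ge> 0"
    and bound: "\<And>t. t > 0 \<Longrightarrow> X \<le> (1 + t) * A\<^sup>2 + (1 + 1/t) * B\<^sup>2"
  shows "X \<le> (A + B)\<^sup>2"
proof -
  have X_le: "X \<le> (A + B + 2 * d) * (A + B)" if "d > 0" for d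
  proof -
    have "X \<le> (1 + (B + d) / (A + d)) * A\<^sup>2 + (1 + 1 / ((B + d) / (A + d))) * B\<^sup>2"
      by (rule bound) (use that assms in simp)
    also have "\<dots> = (A + B + 2 * d) * (A\<^sup>2 / (A + d) + B\<^sup>2 / (B + d))"
      using that assms by (simp add: field_simps)
    also have "\<dots> \<le> (A + B + 2 * d) * (A + B)"
    proof (intro mult_left_mono add_mono)
      show "A\<^sup>2 / (A + d) \<le> A" "B\<^sup>2 / (B + d) \<le> B"
        using that assms by (simp_all add: divide_le_eq power2_eq_square mult_left_mono)
    qed (use that assms in simp)
    finally show ?thesis .
  qed
  have "(\<lambda>n. (A + B + 2 * (1 / real (Suc n))) * (A + B)) \<longlonglongrightarrow> (A + B + 2 * 0) * (A + B)"
    by (intro tendsto_intros LIMSEQ_Suc[OF lim_const_over_n])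
  moreover have "\<forall>n. X \<le> (A + B + 2 * (1 / real (Suc n))) * (A + B)"
    using X_le[of "1 / real (Suc _)"] by simp
  ultimately show ?thesis
    by (intro LIMSEQ_le_const) (auto simp: power2_eq_square)
qed

lemma L2I: "f \<in> borel_measurable M \<Longrightarrow> integrable M (\<lambda>x. (cmod (f x))\<^sup>2) \<Longrightarrow> f \<in> L2 M"
  by (simp add: L2_def)

lemma L2_borel_measurable: "f \<in> L2 M \<Longrightarrow> f \<in> borel_measurable M"
  by (simp add: L2_def)

lemma L2_integrable_norm_squared: "f \<in> L2 M \<Longrightarrow> integrable M (\<lambda>x. (cmod (f x))\<^sup>2)"
  by (simp add: L2_def)

lemma L2_zero: "(\<lambda>x. 0) \<in> L2 M"
  by (simp add: L2_def)

lemma L2_dominated: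
  assumes "f \<in> L2 M" "g \<in> borel_measurable M" "\<And>x. x \<in> space M \<Longrightarrow> cmod (g x) \<le> cmod (f x)"
  shows "g \<in> L2 M"
proof (rule L2I)
  show "integrable M (\<lambda>x. (cmod (g x))\<^sup>2)"
  proof (rule Bochner_Integration.integrable_bound[OF L2_integrable_norm_squared[OF assms(1)]])
    show "(\<lambda>x. (cmod (g x))\<^sup>2) \<in> borel_measurable M" using assms(2) by measurable
    show "AE x in M. norm ((cmod (g x))\<^sup>2) \<le> norm ((cmod (f x))\<^sup>2)"
      using assms(3) by (auto intro!: AE_I2 power_mono)
  qed
qed fact

lemma L2_add:
  assumes "f \<in> L2 M" "g \<in> L2 M"
  shows "(\<lambda>x. f x + g x) \<in> L2 M"
proof (rule L2I)
  show "integrable M (\<lambda>x. (cmod (f x + g x))\<^sup>2)"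
  proof (rule Bochner_Integration.integrable_bound)
    show "integrable M (\<lambda>x. 2 * (cmod (f x))\<^sup>2 + 2 * (cmod (g x))\<^sup>2)"
      using assms by (intro Bochner_Integration.integrable_add integrable_mult_right
          L2_integrable_norm_squared)
    show "(\<lambda>x. (cmod (f x + g x))\<^sup>2) \<in> borel_measurable M"
      using assms[THEN L2_borel_measurable] by measurable
    show "AE x in M. norm ((cmod (f x + g x))\<^sup>2) \<le> norm (2 * (cmod (f x))\<^sup>2 + 2 * (cmod (g x))\<^sup>2)"
      using norm_add_squared_le[of 1 "f _" "g _"] by (intro AE_I2) simp
  qed
qed (use assms[THEN L2_borel_measurable] in measurable)

lemma L2_uminus: "f \<in> L2 M \<Longrightarrow> (\<lambda>x. - f x) \<in> L2 M"
  by (auto simp: L2_def)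

lemma L2_diff: "f \<in> L2 M \<Longrightarrow> g \<in> L2 M \<Longrightarrow> (\<lambda>x. f x - g x) \<in> L2 M"
  using L2_add[OF _ L2_uminus] by fastforce

lemma L2_norm_nonneg: "L2_norm M f \<ge> 0"
  by (simp add: L2_norm_def)

lemma L2_norm_squared: "(L2_norm M f)\<^sup>2 = (\<integral>x. (cmod (f x))\<^sup>2 \<partial>M)"
  by (simp add: L2_norm_def)

lemma L2_norm_triangle:
  assumes f: "f \<in> L2 M" and g: "g \<in> L2 M"
  shows "L2_norm M (\<lambda>x. f x + g x) \<le> L2_norm M f + L2_norm M g"
proof -
  note f2 = L2_integrable_norm_squared[OF f] and g2 = L2_integrable_norm_squared[OF g]
  have "(L2_norm M (\<lambda>x. f x + g x))\<^sup>2 \<le> (L2_norm M f + L2_norm M g)\<^sup>2"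
  proof (rule le_sum_squared_if_weighted_bounds[OF L2_norm_nonneg L2_norm_nonneg])
    fix t :: real assume "t > 0"
    have "(L2_norm M (\<lambda>x. f x + g x))\<^sup>2
        \<le> (\<integral>x. (1 + t) * (cmod (f x))\<^sup>2 + (1 + 1/t) * (cmod (g x))\<^sup>2 \<partial>M)"
      unfolding L2_norm_squared
      by (intro integral_mono norm_add_squared_le \<open>t > 0\<close> L2_integrable_norm_squared L2_add f g
          Bochner_Integration.integrable_add integrable_mult_right f2 g2)
    also have "\<dots> = (1 + t) * (L2_norm M f)\<^sup>2 + (1 + 1/t) * (L2_norm M g)\<^sup>2"
      unfolding L2_norm_squared using f2 g2 by simp
    finally show "(L2_norm M (\<lambda>x. f x + g x))\<^sup>2
        \<le> (1 + t) * (L2_norm M f)\<^sup>2 + (1 + 1/t) * (L2_norm M g)\<^sup>2" .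
  qed
  then show ?thesis
    by (rule power2_le_imp_le) (simp add: L2_norm_nonneg add_nonneg_nonneg)
qed

definition L2_dist :: "'a measure \<Rightarrow> ('a \<Rightarrow> complex) \<Rightarrow> ('a \<Rightarrow> complex) \<Rightarrow> real" where
  "L2_dist M f g = L2_norm M (\<lambda>x. f x - g x)"

lemma L2_dist_nonneg: "L2_dist M f g \<ge> 0"
  by (simp add: L2_dist_def L2_norm_nonneg)

lemma L2_dist_commute: "L2_dist M f g = L2_dist M g f"
  by (simp add: L2_dist_def L2_norm_def norm_minus_commute)

lemma L2_dist_self: "L2_dist M f f = 0"
  by (simp add: L2_dist_def L2_norm_def)

lemma L2_dist_zero_right: "L2_dist M f (\<lambda>x. 0) = L2_norm M f"
  by (simp add: L2_dist_def)

lemma L2_dist_triangle: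
  assumes "f \<in> L2 M" "g \<in> L2 M" "h \<in> L2 M"
  shows "L2_dist M f h \<le> L2_dist M f g + L2_dist M g h"
  using L2_norm_triangle[OF L2_diff[OF assms(1,2)] L2_diff[OF assms(2,3)]]
  by (simp add: L2_dist_def)

lemma L2_dist_eq_0_imp_AE_eq:
  assumes "f \<in> L2 M" "g \<in> L2 M" "L2_dist M f g = 0"
  shows "AE x in M. f x = g x"
proof -
  have "(\<integral>x. (cmod (f x - g x))\<^sup>2 \<partial>M) = 0"
    using assms(3) L2_norm_squared[of M "\<lambda>x. f x - g x"] by (simp add: L2_dist_def)
  then have "AE x in M. (cmod (f x - g x))\<^sup>2 = 0"
    using integral_nonneg_eq_0_iff_AE[OF L2_integrable_norm_squared[OF L2_diff[OF assms(1,2)]]]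
    by simp
  then show ?thesis by eventually_elim simp
qed

lemma L2_dist_AE_cong:
  assumes "f \<in> L2 M" "f' \<in> L2 M" "g \<in> L2 M" "AE x in M. f x = f' x"
  shows "L2_dist M f g = L2_dist M f' g"
proof -
  have "(\<integral>x. (cmod (f x - g x))\<^sup>2 \<partial>M) = (\<integral>x. (cmod (f' x - g x))\<^sup>2 \<partial>M)"
    by (intro integral_cong_AE borel_measurable_integrable L2_integrable_norm_squared L2_diff assms)
      (use assms(4) in auto)
  then show ?thesis by (simp add: L2_dist_def L2_norm_def)
qed

lemma L2_dist_tendsto:
  assumes L2: "\<And>n. f n \<in> L2 M" "\<And>n. g n \<in> L2 M" "f' \<in> L2 M" "g' \<in> L2 M"
    and lim: "(\<lambda>n. L2_dist M (f n) f') \<longlonglongrightarrow> 0" "(\<lambda>n. L2_dist M (g n) g') \<longlonglongrightarrow> 0"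
  shows "(\<lambda>n. L2_dist M (f n) (g n)) \<longlonglongrightarrow> L2_dist M f' g'"
proof -
  have "\<bar>L2_dist M (f n) (g n) - L2_dist M f' g'\<bar> \<le> L2_dist M (f n) f' + L2_dist M (g n) g'" for n
    using L2_dist_triangle[OF L2(1) L2(3) L2(2), of n n] L2_dist_triangle[OF L2(3) L2(4) L2(2), of n]
      L2_dist_triangle[OF L2(3) L2(1) L2(4), of n] L2_dist_triangle[OF L2(1) L2(2) L2(4), of n n]
      L2_dist_commute[of M "f n" f'] L2_dist_commute[of M "g n" g']
    by linarith
  moreover have "(\<lambda>n. L2_dist M (f n) f' + L2_dist M (g n) g') \<longlonglongrightarrow> 0"
    using tendsto_add[OF lim] by simp
  ultimately show ?thesis
    by (subst LIM_zero_iff[symmetric]) (rule Lim_null_comparison[OF always_eventually], auto)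
qed

section \<open>Density of \<open>L\<^sup>1 \<inter> L\<^sup>2\<close> and completeness of \<open>L\<^sup>2\<close>\<close>

lemma L1_L2_L2: "f \<in> L1_L2 M \<Longrightarrow> f \<in> L2 M"
  by (simp add: L1_L2_def)

lemma L1_L2_diff: "f \<in> L1_L2 M \<Longrightarrow> g \<in> L1_L2 M \<Longrightarrow> (\<lambda>x. f x - g x) \<in> L1_L2 M"
  by (simp add: L1_L2_def L2_diff)

text \<open>Integrability comes from \<open>|f| \<le> |f|\<^sup>2 / r\<close> on \<open>{r \<le> |f|}\<close>.\<close>
lemma L2_truncation_in_L1_L2:
  assumes f: "f \<in> L2 M" and "r > 0"
  shows "(\<lambda>x. if r \<le> cmod (f x) then f x else 0) \<in> L1_L2 M"
proof -
  have m: "(\<lambda>x. if r \<le> cmod (f x) then f x else 0) \<in> borel_measurable M"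
    using L2_borel_measurable[OF f] by measurable
  have "integrable M (\<lambda>x. if r \<le> cmod (f x) then f x else 0)"
  proof (rule Bochner_Integration.integrable_bound[OF _ m])
    show "integrable M (\<lambda>x. (cmod (f x))\<^sup>2 / r)"
      using L2_integrable_norm_squared[OF f] by simp
    have "cmod (f x) \<le> (cmod (f x))\<^sup>2 / r" if "r \<le> cmod (f x)" for x
      using that \<open>r > 0\<close> by (simp add: le_divide_eq power2_eq_square mult_left_mono)
    then show "AE x in M. norm (if r \<le> cmod (f x) then f x else 0) \<le> norm ((cmod (f x))\<^sup>2 / r)"
      using \<open>r > 0\<close> by (intro AE_I2) simp
  qed
  moreover have "(\<lambda>x. if r \<le> cmod (f x) then f x else 0) \<in> L2 M"
    by (rule L2_dominated[OF f m]) simp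
  ultimately show ?thesis by (simp add: L1_L2_def)
qed

lemma L1_L2_dense:
  assumes f: "f \<in> L2 M" and "e > 0"
  shows "\<exists>\<phi>\<in>L1_L2 M. L2_dist M \<phi> f < e"
proof -
  define \<phi> where "\<phi> n x = (if 1 / real (Suc n) \<le> cmod (f x) then f x else 0)" for n x
  have \<phi>: "\<phi> n \<in> L1_L2 M" for n
    unfolding \<phi>_def by (rule L2_truncation_in_L1_L2[OF f]) simp
  have "(\<lambda>n. \<integral>x. (cmod (\<phi> n x - f x))\<^sup>2 \<partial>M) \<longlonglongrightarrow> (\<integral>x. 0 \<partial>M)"
  proof (rule integral_dominated_convergence[where w="\<lambda>x. (cmod (f x))\<^sup>2"])
    show "(\<lambda>x. (cmod (\<phi> n x - f x))\<^sup>2) \<in> borel_measurable M" for n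
      using L2_borel_measurable[OF L1_L2_L2[OF \<phi>]] L2_borel_measurable[OF f] by measurable
    show "AE x in M. norm ((cmod (\<phi> n x - f x))\<^sup>2) \<le> (cmod (f x))\<^sup>2" for n
      by (rule AE_I2) (simp add: \<phi>_def)
    show "AE x in M. (\<lambda>n. (cmod (\<phi> n x - f x))\<^sup>2) \<longlonglongrightarrow> 0"
    proof (rule AE_I2)
      fix x
      show "(\<lambda>n. (cmod (\<phi> n x - f x))\<^sup>2) \<longlonglongrightarrow> 0"
      proof (cases "f x = 0")
        case False
        then obtain N where N: "inverse (real (Suc N)) < cmod (f x)"
          using reals_Archimedean[of "cmod (f x)"] by auto
        have "1 / real (Suc n) \<le> cmod (f x)" if "N \<le> n" for n
          using N that by (smt (verit) frac_le inverse_eq_divide of_nat_0_le_iff of_nat_mono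
              nat_le_real_less of_nat_Suc)
        then have "eventually (\<lambda>n. (cmod (\<phi> n x - f x))\<^sup>2 = 0) sequentially"
          unfolding \<phi>_def eventually_sequentially by auto
        then show ?thesis by (rule tendsto_eventually)
      qed (simp add: \<phi>_def)
    qed
  qed (use L2_integrable_norm_squared[OF f] in simp_all)
  then have "(\<lambda>n. L2_dist M (\<phi> n) f) \<longlonglongrightarrow> 0"
    unfolding L2_dist_def L2_norm_def using tendsto_real_sqrt by fastforce
  then obtain n where "L2_dist M (\<phi> n) f < e"
    using \<open>e > 0\<close> by (metis LIMSEQ_D L2_dist_nonneg abs_of_nonneg diff_zero le_refl real_norm_def)
  with \<phi> show ?thesis by blast
qed

lemma L1_L2_approx:
  assumes "f \<in> L2 M"
  obtains \<psi> where "\<And>n. \<psi> n \<in> L1_L2 M" "\<And>n. L2_dist M (\<psi> n) f < (1/2) ^ Suc n"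
    "(\<lambda>n. L2_dist M (\<psi> n) f) \<longlonglongrightarrow> 0"
proof -
  obtain \<psi> where \<psi>: "\<And>n. \<psi> n \<in> L1_L2 M" and close: "\<And>n. L2_dist M (\<psi> n) f < (1/2) ^ Suc n"
    using L1_L2_dense[OF assms, of "(1/2) ^ Suc _"] by (metis zero_less_power zero_less_divide_1_iff
        zero_less_numeral)
  have "(\<lambda>n. L2_dist M (\<psi> n) f) \<longlonglongrightarrow> 0"
  proof (rule Lim_null_comparison[OF always_eventually])
    show "\<forall>n. norm (L2_dist M (\<psi> n) f) \<le> (1/2) ^ Suc n"
      using close by (simp add: L2_dist_nonneg less_imp_le)
  qed (intro LIMSEQ_Suc LIMSEQ_realpow_zero; simp)
  with that \<psi> close show ?thesis by blast
qed

lemma convergent_if_summable_norm_diff: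
  fixes s :: "nat \<Rightarrow> 'a::banach"
  assumes "summable (\<lambda>n. norm (s (Suc n) - s n))"
  shows "convergent s"
proof -
  have "(\<lambda>n. \<Sum>i<n. s (Suc i) - s i) \<longlonglongrightarrow> (\<Sum>i. s (Suc i) - s i)"
    using summable_LIMSEQ[OF summable_norm_cancel[OF assms]] .
  then have "(\<lambda>n. (s n - s 0) + s 0) \<longlonglongrightarrow> (\<Sum>i. s (Suc i) - s i) + s 0"
    by (intro tendsto_add) (simp_all add: sum_lessThan_telescope)
  then show ?thesis by (auto simp: convergent_def)
qed

lemma le_weighted_square_plus_inverse:
  fixes a q :: real
  assumes "q > 0"
  shows "a \<le> q * a\<^sup>2 + 1/q"
proof -
  have "0 \<le> (q * a - 1)\<^sup>2 / q" using assms by simp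
  also have "\<dots> = q * a\<^sup>2 - 2 * a + 1/q"
    using assms by (simp add: power2_eq_square field_simps)
  finally have "2 * a \<le> q * a\<^sup>2 + 1/q" by simp
  moreover have "0 \<le> q * a\<^sup>2 + 1/q" using assms by simp
  ultimately show ?thesis by linarith
qed

text \<open>Pointwise, \<open>|f\<^sub>n| \<le> 2\<^sup>n |f\<^sub>n|\<^sup>2 + 2\<^sup>-\<^sup>n\<close>, and \<open>\<Sum>\<^sub>n 2\<^sup>n |f\<^sub>n|\<^sup>2\<close> has finite integral.\<close>
lemma AE_summable_if_L2_norm_geometric:
  assumes L2: "\<And>n. f n \<in> L2 M" and small: "\<And>n. L2_norm M (f n) \<le> (1/2) ^ n"
  shows "AE x in M. summable (\<lambda>n. cmod (f n x))"
proof -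
  define b where "b n x = ennreal (2 ^ n * (cmod (f n x))\<^sup>2)" for n x
  have b_measurable: "b n \<in> borel_measurable M" for n
    unfolding b_def using L2_borel_measurable[OF L2] by measurable
  have integral_b: "(\<integral>\<^sup>+x. b n x \<partial>M) \<le> ennreal ((1/2) ^ n)" for n
  proof -
    have "(L2_norm M (f n))\<^sup>2 \<le> ((1/2) ^ n)\<^sup>2"
      by (rule power_mono[OF small L2_norm_nonneg])
    then have "2 ^ n * (L2_norm M (f n))\<^sup>2 \<le> 2 ^ n * ((1/2) ^ n)\<^sup>2" by simp
    also have "\<dots> = (1/2) ^ n" by (simp add: power2_eq_square power_mult_distrib[symmetric])
    finally have "ennreal (2 ^ n * (L2_norm M (f n))\<^sup>2) \<le> ennreal ((1/2) ^ n)"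
      by (rule ennreal_leI)
    moreover have "(\<integral>\<^sup>+x. b n x \<partial>M) = ennreal (2 ^ n * (L2_norm M (f n))\<^sup>2)"
      unfolding b_def L2_norm_squared
      by (subst nn_integral_eq_integral) (auto intro: L2_integrable_norm_squared[OF L2])
    ultimately show ?thesis by simp
  qed
  have "(\<integral>\<^sup>+x. (\<Sum>n. b n x) \<partial>M) = (\<Sum>n. \<integral>\<^sup>+x. b n x \<partial>M)"
    by (rule nn_integral_suminf[OF b_measurable])
  also have "\<dots> \<le> (\<Sum>n. ennreal ((1/2) ^ n))"
    by (intro suminf_le integral_b) auto
  also have "\<dots> < \<infinity>"
    by (subst suminf_ennreal2) auto
  finally have "(\<integral>\<^sup>+x. (\<Sum>n. b n x) \<partial>M) \<noteq> \<infinity>" by simp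
  then have "AE x in M. (\<Sum>n. b n x) \<noteq> \<infinity>"
    by (rule nn_integral_PInf_AE[rotated]) (rule borel_measurable_suminf_order[OF b_measurable])
  then show ?thesis
  proof eventually_elim
    case (elim x)
    have "summable (\<lambda>n. 2 ^ n * (cmod (f n x))\<^sup>2)"
      by (rule summable_suminf_not_top) (use elim in \<open>simp_all add: b_def\<close>)
    then have "summable (\<lambda>n. 2 ^ n * (cmod (f n x))\<^sup>2 + (1/2) ^ n)"
      by (intro summable_add summable_geometric) simp_all
    moreover have "norm (cmod (f n x)) \<le> 2 ^ n * (cmod (f n x))\<^sup>2 + (1/2) ^ n" for n
      using le_weighted_square_plus_inverse[of "2 ^ n" "cmod (f n x)"]
      by (simp add: power_one_over)
    ultimately show ?case by (rule summable_comparison_test')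
  qed
qed

lemma L2_norm_le_if_AE_tendsto:
  assumes L2: "\<And>m. f m \<in> L2 M" and lim: "AE x in M. (\<lambda>m. f m x) \<longlonglongrightarrow> k x"
    and k: "k \<in> borel_measurable M" and bound: "\<And>m. L2_norm M (f m) \<le> B"
  shows "k \<in> L2 M" "L2_norm M k \<le> B"
proof -
  have "B \<ge> 0" using bound[of 0] L2_norm_nonneg[of M "f 0"] by linarith
  have "(\<integral>\<^sup>+x. ennreal ((cmod (k x))\<^sup>2) \<partial>M) = (\<integral>\<^sup>+x. liminf (\<lambda>m. ennreal ((cmod (f m x))\<^sup>2)) \<partial>M)"
    using lim by (intro nn_integral_cong_AE, eventually_elim)
      (simp add: lim_imp_Liminf[symmetric] tendsto_ennrealI tendsto_power tendsto_norm)
  also have "\<dots> \<le> liminf (\<lambda>m. \<integral>\<^sup>+x. ennreal ((cmod (f m x))\<^sup>2) \<partial>M)"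
    by (rule nn_integral_liminf) (use L2_borel_measurable[OF L2] in measurable)
  also have "\<dots> \<le> ennreal (B\<^sup>2)"
  proof (intro Liminf_le always_eventually allI)
    fix m
    have "(L2_norm M (f m))\<^sup>2 \<le> B\<^sup>2" by (rule power_mono[OF bound L2_norm_nonneg])
    then show "(\<integral>\<^sup>+x. ennreal ((cmod (f m x))\<^sup>2) \<partial>M) \<le> ennreal (B\<^sup>2)"
      unfolding L2_norm_squared
      by (subst nn_integral_eq_integral) (auto intro: L2_integrable_norm_squared[OF L2] ennreal_leI)
  qed simp
  finally have fin: "(\<integral>\<^sup>+x. ennreal ((cmod (k x))\<^sup>2) \<partial>M) \<le> ennreal (B\<^sup>2)" .
  show k_L2: "k \<in> L2 M"
  proof (rule L2I[OF k])
    have "(\<integral>\<^sup>+x. ennreal (norm ((cmod (k x))\<^sup>2)) \<partial>M) < \<infinity>"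
      using le_less_trans[OF fin ennreal_less_top] by simp
    then show "integrable M (\<lambda>x. (cmod (k x))\<^sup>2)"
      using k by (simp add: integrable_iff_bounded)
  qed
  have "(L2_norm M k)\<^sup>2 \<le> B\<^sup>2"
    using fin unfolding L2_norm_squared
    by (subst (asm) nn_integral_eq_integral) (auto intro: L2_integrable_norm_squared[OF k_L2])
  then show "L2_norm M k \<le> B"
    using \<open>B \<ge> 0\<close> by (rule power2_le_imp_le)
qed

lemma L2_dist_le_if_geometric:
  assumes L2: "\<And>n. s n \<in> L2 M" and steps: "\<And>n. L2_dist M (s (Suc n)) (s n) \<le> (1/2) ^ n"
  shows "n \<le> m \<Longrightarrow> L2_dist M (s m) (s n) \<le> 2 * (1/2) ^ n - 2 * (1/2) ^ m"
proof (induction m rule: dec_induct)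
  case (step m)
  have "L2_dist M (s (Suc m)) (s n) \<le> L2_dist M (s (Suc m)) (s m) + L2_dist M (s m) (s n)"
    by (rule L2_dist_triangle[OF L2 L2 L2])
  with step.IH steps[of m] show ?case by simp
qed (simp add: L2_dist_self)

text \<open>Riesz--Fischer: the sequence converges a.e., and its pointwise limit is its
  \<open>L\<^sup>2\<close> limit by Fatou's lemma.\<close>
lemma L2_complete:
  assumes L2: "\<And>n. s n \<in> L2 M" and steps: "\<And>n. L2_dist M (s (Suc n)) (s n) \<le> (1/2) ^ n"
  obtains k where "k \<in> L2 M" "(\<lambda>n. L2_dist M (s n) k) \<longlonglongrightarrow> 0"
proof -
  have "AE x in M. summable (\<lambda>n. cmod (s (Suc n) x - s n x))"
    using steps by (intro AE_summable_if_L2_norm_geometric L2_diff L2) (simp add: L2_dist_def)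
  then have "AE x in M. convergent (\<lambda>n. s n x)"
    by eventually_elim (rule convergent_if_summable_norm_diff)
  then have lim: "AE x in M. (\<lambda>n. s n x) \<longlonglongrightarrow> lim (\<lambda>n. s n x)"
    by eventually_elim (simp add: convergent_LIMSEQ_iff)
  define k where "k x = lim (\<lambda>n. s n x)" for x
  have k: "k \<in> borel_measurable M"
    unfolding k_def using L2_borel_measurable[OF L2] by measurable
  have tail: "(\<lambda>x. s n x - k x) \<in> L2 M \<and> L2_dist M (s n) k \<le> 2 * (1/2) ^ n" for n
  proof -
    have bound: "L2_norm M (\<lambda>x. s n x - s (n + m) x) \<le> 2 * (1/2) ^ n" for m
    proof -
      have "L2_dist M (s n) (s (n + m)) \<le> 2 * (1/2) ^ n"
        using L2_dist_le_if_geometric[OF L2 steps, of n "n + m"]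
          L2_dist_commute[of M "s n" "s (n + m)"] zero_le_power[of "1/2::real" "n + m"]
        by linarith
      then show ?thesis by (simp only: L2_dist_def)
    qed
    have "AE x in M. (\<lambda>m. s n x - s (n + m) x) \<longlonglongrightarrow> s n x - k x"
      using lim
    proof eventually_elim
      case (elim x)
      then have "(\<lambda>m. s (m + n) x) \<longlonglongrightarrow> k x"
        unfolding k_def by (rule LIMSEQ_ignore_initial_segment)
      then show ?case by (intro tendsto_diff tendsto_const) (simp add: add.commute)
    qed
    moreover have "(\<lambda>x. s n x - k x) \<in> borel_measurable M"
      using L2_borel_measurable[OF L2] k by measurable
    ultimately show ?thesis
      using L2_norm_le_if_AE_tendsto[OF L2_diff[OF L2 L2] _ _ bound] by (simp add: L2_dist_def)
  qed
  have "k \<in> L2 M"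
    using L2_diff[OF L2[of 0], of "\<lambda>x. s 0 x - k x"] tail[of 0] by simp
  moreover have "(\<lambda>n. L2_dist M (s n) k) \<longlonglongrightarrow> 0"
  proof (rule Lim_null_comparison[OF always_eventually])
    show "\<forall>n. norm (L2_dist M (s n) k) \<le> 2 * (1/2) ^ n"
      using tail by (simp add: L2_dist_nonneg)
    show "(\<lambda>n. 2 * (1/2::real) ^ n) \<longlonglongrightarrow> 0"
      using tendsto_mult_right_zero[OF LIMSEQ_realpow_zero[of "1/2::real"]] by simp
  qed
  ultimately show ?thesis by (rule that)
qed

section \<open>The \<open>L\<^sup>2\<close> Fourier transform and the equation \<open>L\<^sub>c u = g\<close>\<close>

lemma weight_ge_one: "weight \<gamma> c \<xi> \<ge> 1"
  by (simp add: weight_def)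

lemma weight_nonzero: "weight \<gamma> c \<xi> \<noteq> 0"
  using weight_ge_one[of \<gamma> c \<xi>] by linarith

lemma weight_measurable:
  assumes [measurable]: "\<gamma> \<in> borel_measurable M"
  shows "weight \<gamma> c \<in> borel_measurable M"
  unfolding weight_def by measurable

lemma norm_weight_mult: "cmod (complex_of_real (weight \<gamma> c \<xi>) * z) = weight \<gamma> c \<xi> * cmod z"
  using weight_ge_one[of \<gamma> c \<xi>] by (simp add: norm_mult)

context
  fixes \<mu> :: "'g::{ab_group_add, t2_space} measure"
    and \<nu> :: "('g \<Rightarrow> complex) measure"
  assumes plancherel: "plancherel_setting \<mu> \<nu>"
begin

lemma sets_haar_eq_borel: "sets \<mu> = sets borel"
proof -
  have "sets \<mu> = sets (borel_of euclidean)"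
    using plancherel by (simp add: plancherel_setting_def haar_measure_on_def radon_measure_on_def)
  also have "borel_of euclidean = (borel :: 'g measure)"
    by (simp add: borel_of_def borel_def)
  finally show ?thesis .
qed

lemma space_dual_haar_subset: "space \<nu> \<subseteq> dual_group"
proof -
  have "space \<nu> = topspace dual_topology"
    using plancherel by (simp add: plancherel_setting_def haar_measure_on_def radon_measure_on_def)
  also have "\<dots> \<subseteq> dual_group"
    unfolding dual_topology_def topology_generated_by_topspace by blast
  finally show ?thesis .
qed

lemma integrable_cnj_character_mult:
  assumes "\<xi> \<in> dual_group" "f \<in> L1_L2 \<mu>"
  shows "integrable \<mu> (\<lambda>x. cnj (\<xi> x) * f x)"
proof (rule Bochner_Integration.integrable_bound[of _ f])
  show "integrable \<mu> f" using assms(2) by (simp add: L1_L2_def)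
  have "continuous_on UNIV (\<lambda>x. cnj (\<xi> x))"
    using assms(1) by (intro continuous_intros) (simp add: dual_group_def)
  then have "(\<lambda>x. cnj (\<xi> x)) \<in> borel_measurable \<mu>"
    using measurable_cong_sets[OF sets_haar_eq_borel refl] borel_measurable_continuous_onI by blast
  then show "(\<lambda>x. cnj (\<xi> x) * f x) \<in> borel_measurable \<mu>"
    using L2_borel_measurable[OF L1_L2_L2[OF assms(2)]] by measurable
  show "AE x in \<mu>. norm (cnj (\<xi> x) * f x) \<le> norm (f x)"
    using assms(1) by (intro AE_I2) (simp add: norm_mult dual_group_def)
qed

lemma fourier_diff:
  assumes "\<xi> \<in> dual_group" "f \<in> L1_L2 \<mu>" "g \<in> L1_L2 \<mu>"
  shows "fourier \<mu> (\<lambda>x. f x - g x) \<xi> = fourier \<mu> f \<xi> - fourier \<mu> g \<xi>"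
  using Bochner_Integration.integral_diff[OF integrable_cnj_character_mult[OF assms(1,2)]
      integrable_cnj_character_mult[OF assms(1,3)]]
  by (simp add: fourier_def right_diff_distrib)

lemma fourier_in_L2: "f \<in> L1_L2 \<mu> \<Longrightarrow> fourier \<mu> f \<in> L2 \<nu>"
  using plancherel by (simp add: plancherel_setting_def)

lemma L2_dist_fourier:
  assumes "f \<in> L1_L2 \<mu>" "g \<in> L1_L2 \<mu>"
  shows "L2_dist \<nu> (fourier \<mu> f) (fourier \<mu> g) = L2_dist \<mu> f g"
proof -
  have "L2_dist \<nu> (fourier \<mu> f) (fourier \<mu> g) = L2_norm \<nu> (fourier \<mu> (\<lambda>x. f x - g x))"
    unfolding L2_dist_def L2_norm_def
    using space_dual_haar_subset fourier_diff[OF _ assms] by (intro arg_cong[where f=sqrt]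
        Bochner_Integration.integral_cong) auto
  also have "\<dots> = L2_norm \<mu> (\<lambda>x. f x - g x)"
    using plancherel L1_L2_diff[OF assms] by (simp add: plancherel_setting_def)
  finally show ?thesis by (simp add: L2_dist_def)
qed

lemma fourier_L2_tendsto:
  assumes "fourier_L2 \<mu> \<nu> f h" "\<And>n. \<psi> n \<in> L1_L2 \<mu>" "(\<lambda>n. L2_dist \<mu> (\<psi> n) f) \<longlonglongrightarrow> 0"
  shows "(\<lambda>n. L2_dist \<nu> (fourier \<mu> (\<psi> n)) h) \<longlonglongrightarrow> 0"
  using assms unfolding fourier_L2_def L2_dist_def by blast

lemma L2_dist_fourier_L2:
  assumes F1: "fourier_L2 \<mu> \<nu> f1 h1" and F2: "fourier_L2 \<mu> \<nu> f2 h2"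
  shows "L2_dist \<nu> h1 h2 = L2_dist \<mu> f1 f2"
proof -
  have L2: "f1 \<in> L2 \<mu>" "h1 \<in> L2 \<nu>" "f2 \<in> L2 \<mu>" "h2 \<in> L2 \<nu>"
    using F1 F2 by (simp_all add: fourier_L2_def)
  obtain \<psi> where \<psi>: "\<And>n. \<psi> n \<in> L1_L2 \<mu>" and \<psi>_lim: "(\<lambda>n. L2_dist \<mu> (\<psi> n) f1) \<longlonglongrightarrow> 0"
    using L1_L2_approx[OF L2(1)] by metis
  obtain \<rho> where \<rho>: "\<And>n. \<rho> n \<in> L1_L2 \<mu>" and \<rho>_lim: "(\<lambda>n. L2_dist \<mu> (\<rho> n) f2) \<longlonglongrightarrow> 0"
    using L1_L2_approx[OF L2(3)] by metis
  have "(\<lambda>n. L2_dist \<nu> (fourier \<mu> (\<psi> n)) (fourier \<mu> (\<rho> n))) \<longlonglongrightarrow> L2_dist \<nu> h1 h2"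
    by (intro L2_dist_tendsto fourier_in_L2 \<psi> \<rho> L2 fourier_L2_tendsto[OF F1 \<psi> \<psi>_lim]
        fourier_L2_tendsto[OF F2 \<rho> \<rho>_lim])
  moreover have "(\<lambda>n. L2_dist \<mu> (\<psi> n) (\<rho> n)) \<longlonglongrightarrow> L2_dist \<mu> f1 f2"
    by (intro L2_dist_tendsto L1_L2_L2 \<psi> \<rho> L2 \<psi>_lim \<rho>_lim)
  ultimately show ?thesis
    by (simp add: L2_dist_fourier[OF \<psi> \<rho>] LIMSEQ_unique)
qed

lemma fourier_L2_unique:
  assumes "fourier_L2 \<mu> \<nu> f h1" "fourier_L2 \<mu> \<nu> f h2"
  shows "AE \<xi> in \<nu>. h1 \<xi> = h2 \<xi>"
  using assms L2_dist_fourier_L2[OF assms] L2_dist_self[of \<mu> f]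
  by (intro L2_dist_eq_0_imp_AE_eq) (simp_all add: fourier_L2_def)

lemma fourier_L2_inj:
  assumes F1: "fourier_L2 \<mu> \<nu> f1 h1" and F2: "fourier_L2 \<mu> \<nu> f2 h2"
    and "AE \<xi> in \<nu>. h1 \<xi> = h2 \<xi>"
  shows "AE x in \<mu>. f1 x = f2 x"
proof (rule L2_dist_eq_0_imp_AE_eq)
  have L2: "f1 \<in> L2 \<mu>" "f2 \<in> L2 \<mu>" "h1 \<in> L2 \<nu>" "h2 \<in> L2 \<nu>"
    using F1 F2 by (simp_all add: fourier_L2_def)
  then show "f1 \<in> L2 \<mu>" "f2 \<in> L2 \<mu>" by simp_all
  have "L2_dist \<mu> f1 f2 = L2_dist \<nu> h1 h2"
    by (rule L2_dist_fourier_L2[OF F1 F2, symmetric])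
  also have "\<dots> = L2_dist \<nu> h2 h2"
    by (rule L2_dist_AE_cong[OF L2(3,4,4) assms(3)])
  finally show "L2_dist \<mu> f1 f2 = 0" by (simp add: L2_dist_self)
qed

lemma fourier_L2_zero: "fourier_L2 \<mu> \<nu> (\<lambda>x. 0) (\<lambda>\<xi>. 0)"
proof -
  have "L2_norm \<nu> (fourier \<mu> \<phi>) = L2_norm \<mu> \<phi>" if "\<phi> \<in> L1_L2 \<mu>" for \<phi>
    using plancherel that by (simp add: plancherel_setting_def)
  then show ?thesis by (simp add: fourier_L2_def L2_zero)
qed

lemma L2_norm_fourier_L2: "fourier_L2 \<mu> \<nu> f h \<Longrightarrow> L2_norm \<nu> h = L2_norm \<mu> f"
  using L2_dist_fourier_L2[OF _ fourier_L2_zero] by (simp add: L2_dist_zero_right)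

text \<open>The transforms of fast \<open>L\<^sup>1 \<inter> L\<^sup>2\<close> approximants of \<open>f\<close> form a sequence
  with geometrically decreasing steps, whose limit is the transform of \<open>f\<close>.\<close>
lemma fourier_L2_exists:
  assumes f: "f \<in> L2 \<mu>"
  shows "\<exists>h. fourier_L2 \<mu> \<nu> f h"
proof -
  obtain \<psi> where \<psi>: "\<And>n. \<psi> n \<in> L1_L2 \<mu>" and close: "\<And>n. L2_dist \<mu> (\<psi> n) f < (1/2) ^ Suc n"
    and \<psi>_lim: "(\<lambda>n. L2_dist \<mu> (\<psi> n) f) \<longlonglongrightarrow> 0"
    using L1_L2_approx[OF f] by metis
  have steps: "L2_dist \<nu> (fourier \<mu> (\<psi> (Suc n))) (fourier \<mu> (\<psi> n)) \<le> (1/2) ^ n" for n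
  proof -
    have "L2_dist \<mu> (\<psi> (Suc n)) (\<psi> n) \<le> L2_dist \<mu> (\<psi> (Suc n)) f + L2_dist \<mu> (\<psi> n) f"
      using L2_dist_triangle[OF L1_L2_L2[OF \<psi>] f L1_L2_L2[OF \<psi>], of "Suc n" n]
        L2_dist_commute[of \<mu> f "\<psi> n"] by simp
    also have "\<dots> \<le> (1/2) ^ Suc (Suc n) + (1/2) ^ Suc n"
      using close[of n] close[of "Suc n"] by simp
    also have "\<dots> \<le> (1/2) ^ n" by simp
    finally show ?thesis by (simp add: L2_dist_fourier \<psi>)
  qed
  obtain h where h: "h \<in> L2 \<nu>" and lim: "(\<lambda>n. L2_dist \<nu> (fourier \<mu> (\<psi> n)) h) \<longlonglongrightarrow> 0"
    by (rule L2_complete[where s = "\<lambda>n. fourier \<mu> (\<psi> n)", OF fourier_in_L2[OF \<psi>] steps])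
  have "fourier_L2 \<mu> \<nu> f h"
    unfolding fourier_L2_def
  proof (intro conjI allI impI f h)
    fix \<phi> :: "nat \<Rightarrow> 'g \<Rightarrow> complex"
    assume "\<forall>n. \<phi> n \<in> L1_L2 \<mu>" and "(\<lambda>n. L2_norm \<mu> (\<lambda>x. \<phi> n x - f x)) \<longlonglongrightarrow> 0"
    then have \<phi>: "\<And>n. \<phi> n \<in> L1_L2 \<mu>" and \<phi>_lim: "(\<lambda>n. L2_dist \<mu> (\<phi> n) f) \<longlonglongrightarrow> 0"
      by (simp_all add: L2_dist_def)
    have "(\<lambda>n. L2_dist \<mu> (\<phi> n) (\<psi> n)) \<longlonglongrightarrow> L2_dist \<mu> f f"
      by (rule L2_dist_tendsto[OF L1_L2_L2[OF \<phi>] L1_L2_L2[OF \<psi>] f f \<phi>_lim \<psi>_lim])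
    then have "(\<lambda>n. L2_dist \<nu> (fourier \<mu> (\<phi> n)) (fourier \<mu> (\<psi> n))) \<longlonglongrightarrow> 0"
      by (simp only: L2_dist_fourier[OF \<phi> \<psi>] L2_dist_self)
    from tendsto_add[OF this lim] have sum_lim: "(\<lambda>n. L2_dist \<nu> (fourier \<mu> (\<phi> n)) (fourier \<mu> (\<psi> n))
        + L2_dist \<nu> (fourier \<mu> (\<psi> n)) h) \<longlonglongrightarrow> 0"
      by simp
    have bound: "L2_dist \<nu> (fourier \<mu> (\<phi> n)) h
        \<le> L2_dist \<nu> (fourier \<mu> (\<phi> n)) (fourier \<mu> (\<psi> n)) + L2_dist \<nu> (fourier \<mu> (\<psi> n)) h" for n
      by (rule L2_dist_triangle[OF fourier_in_L2[OF \<phi>] fourier_in_L2[OF \<psi>] h])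
    have "(\<lambda>n. L2_dist \<nu> (fourier \<mu> (\<phi> n)) h) \<longlonglongrightarrow> 0"
      by (rule Lim_null_comparison[OF _ sum_lim]) (simp add: L2_dist_nonneg bound)
    then show "(\<lambda>n. L2_norm \<nu> (\<lambda>\<xi>. fourier \<mu> (\<phi> n) \<xi> - h \<xi>)) \<longlonglongrightarrow> 0"
      by (simp only: L2_dist_def)
  qed
  then show ?thesis by blast
qed

lemma Lc_solves_exists:
  assumes \<gamma>: "\<gamma> \<in> borel_measurable \<nu>" and g: "g \<in> L2 \<mu>"
  shows "\<exists>u. Lc_solves \<mu> \<nu> \<gamma> c u g"
proof -
  obtain k where Fk: "fourier_L2 \<mu> \<nu> g k"
    using fourier_L2_exists[OF g] by blast
  then have k: "k \<in> L2 \<nu>" by (simp add: fourier_L2_def)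
  define h where "h \<xi> = - k \<xi> / complex_of_real (weight \<gamma> c \<xi>)" for \<xi>
  have wh: "- complex_of_real (weight \<gamma> c \<xi>) * h \<xi> = k \<xi>" for \<xi>
    using weight_ge_one[of \<gamma> c \<xi>] by (simp add: h_def)
  have norm_k: "cmod (k \<xi>) = weight \<gamma> c \<xi> * cmod (h \<xi>)" for \<xi>
    using norm_weight_mult[of \<gamma> c \<xi> "h \<xi>"] wh[of \<xi>] by (metis mult_minus_left norm_minus_cancel)
  have "h \<in> L2 \<nu>"
  proof (rule L2_dominated[OF k])
    show "h \<in> borel_measurable \<nu>"
      unfolding h_def using L2_borel_measurable[OF k] weight_measurable[OF \<gamma>] by measurable
    show "cmod (h \<xi>) \<le> cmod (k \<xi>)" for \<xi>
      using norm_k[of \<xi>] mult_right_mono[OF weight_ge_one[of \<gamma> c \<xi>] norm_ge_zero[of "h \<xi>"]]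
      by simp
  qed
  then obtain u where Fu: "fourier_L2 \<mu> \<nu> u h"
    using plancherel by (auto simp: plancherel_setting_def)
  have "(weight \<gamma> c \<xi>)\<^sup>2 * (cmod (h \<xi>))\<^sup>2 = (cmod (k \<xi>))\<^sup>2" for \<xi>
    by (simp add: norm_k power_mult_distrib)
  then have "u \<in> H_space \<mu> \<nu> \<gamma> c"
    using Fu L2_integrable_norm_squared[OF k] by (auto simp: H_space_def fourier_L2_def)
  moreover have "(\<lambda>\<xi>. - complex_of_real (weight \<gamma> c \<xi>) * h \<xi>) = k"
    using wh by (simp add: fun_eq_iff)
  ultimately show ?thesis
    unfolding Lc_solves_def using Fu Fk by (intro exI[of _ u] conjI exI[of _ h]) simp_all
qed

lemma Lc_solves_unique:
  assumes "Lc_solves \<mu> \<nu> \<gamma> c u g" "Lc_solves \<mu> \<nu> \<gamma> c v g"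
  shows "AE x in \<mu>. v x = u x"
proof -
  obtain hu where Fu: "fourier_L2 \<mu> \<nu> u hu"
    and Fgu: "fourier_L2 \<mu> \<nu> g (\<lambda>\<xi>. - complex_of_real (weight \<gamma> c \<xi>) * hu \<xi>)"
    using assms(1) unfolding Lc_solves_def by blast
  obtain hv where Fv: "fourier_L2 \<mu> \<nu> v hv"
    and Fgv: "fourier_L2 \<mu> \<nu> g (\<lambda>\<xi>. - complex_of_real (weight \<gamma> c \<xi>) * hv \<xi>)"
    using assms(2) unfolding Lc_solves_def by blast
  have "AE \<xi> in \<nu>. - complex_of_real (weight \<gamma> c \<xi>) * hv \<xi> = - complex_of_real (weight \<gamma> c \<xi>) * hu \<xi>"
    by (rule fourier_L2_unique[OF Fgv Fgu])
  then have "AE \<xi> in \<nu>. hv \<xi> = hu \<xi>"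
    by eventually_elim (simp add: weight_nonzero)
  then show ?thesis
    by (rule fourier_L2_inj[OF Fv Fu])
qed

lemma H_norm_Lc_solves:
  assumes \<gamma>: "\<gamma> \<in> borel_measurable \<nu>" and "Lc_solves \<mu> \<nu> \<gamma> c u g"
  shows "H_norm \<mu> \<nu> \<gamma> c u = L2_norm \<mu> g"
proof -
  obtain h where Fu: "fourier_L2 \<mu> \<nu> u h"
    and Fg: "fourier_L2 \<mu> \<nu> g (\<lambda>\<xi>. - complex_of_real (weight \<gamma> c \<xi>) * h \<xi>)"
    using assms(2) unfolding Lc_solves_def by blast
  define H where "H = (SOME h. fourier_L2 \<mu> \<nu> u h)"
  have FH: "fourier_L2 \<mu> \<nu> u H"
    unfolding H_def by (rule someI[where P = "fourier_L2 \<mu> \<nu> u", OF Fu])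
  have "(\<integral>\<xi>. (weight \<gamma> c \<xi>)\<^sup>2 * (cmod (H \<xi>))\<^sup>2 \<partial>\<nu>)
      = (\<integral>\<xi>. (cmod (- complex_of_real (weight \<gamma> c \<xi>) * h \<xi>))\<^sup>2 \<partial>\<nu>)"
  proof (rule integral_cong_AE)
    show "(\<lambda>\<xi>. (weight \<gamma> c \<xi>)\<^sup>2 * (cmod (H \<xi>))\<^sup>2) \<in> borel_measurable \<nu>"
      using weight_measurable[OF \<gamma>] L2_borel_measurable[of H] FH
      by (simp add: fourier_L2_def) measurable
    have "(\<lambda>\<xi>. - complex_of_real (weight \<gamma> c \<xi>) * h \<xi>) \<in> L2 \<nu>"
      using Fg unfolding fourier_L2_def by blast
    then show "(\<lambda>\<xi>. (cmod (- complex_of_real (weight \<gamma> c \<xi>) * h \<xi>))\<^sup>2) \<in> borel_measurable \<nu>"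
      using L2_borel_measurable by measurable
    show "AE \<xi> in \<nu>. (weight \<gamma> c \<xi>)\<^sup>2 * (cmod (H \<xi>))\<^sup>2
        = (cmod (- complex_of_real (weight \<gamma> c \<xi>) * h \<xi>))\<^sup>2"
      using fourier_L2_unique[OF FH Fu]
      by eventually_elim (simp add: norm_weight_mult power_mult_distrib)
  qed
  also have "\<dots> = (L2_norm \<nu> (\<lambda>\<xi>. - complex_of_real (weight \<gamma> c \<xi>) * h \<xi>))\<^sup>2"
    by (rule L2_norm_squared[symmetric])
  also have "\<dots> = (L2_norm \<mu> g)\<^sup>2"
    by (simp only: L2_norm_fourier_L2[OF Fg])
  finally show ?thesis
    by (simp add: H_norm_def H_def[symmetric] L2_norm_nonneg)
qed

end

theorem theorem5:
  fixes \<mu> :: "'g::{ab_group_add, t2_space} measure"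
    and \<nu> :: "('g \<Rightarrow> complex) measure"
    and \<gamma> :: "('g \<Rightarrow> complex) \<Rightarrow> real"
    and c :: real and g :: "'g \<Rightarrow> complex"
  assumes "plancherel_setting \<mu> \<nu>"
    and "\<gamma> \<in> Gamma_class"
    and "\<gamma> \<in> borel_measurable \<nu>"
    and "c > 0"
    and "g \<in> L2 \<mu>"
  shows "\<exists>u. Lc_solves \<mu> \<nu> \<gamma> c u g \<and>
             (\<forall>v. Lc_solves \<mu> \<nu> \<gamma> c v g \<longrightarrow> (AE x in \<mu>. v x = u x)) \<and>
             H_norm \<mu> \<nu> \<gamma> c u = L2_norm \<mu> g"
proof -
  obtain u where u: "Lc_solves \<mu> \<nu> \<gamma> c u g"
    using Lc_solves_exists[OF assms(1,3,5)] by blast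
  show ?thesis
    using u Lc_solves_unique[OF assms(1) u] H_norm_Lc_solves[OF assms(1,3) u] by blast
qed

end
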